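(* Let $I$ be a conditional indicator w.r.t. $\mathcal{H}$ which is increasing and regular, and define for $X\in\mathbb{L}^0(\overline{\mathbb{R}},\mathcal{F})$ $$I^L(X)=\operatorname{ess\,sup}_{\mathcal{H}}\{I(Y):Y\in\mathbb{D}_I,\ Y\le X\},\qquad I^U(X)=\operatorname{ess\,inf}_{\mathcal{H}}\{I(Y):Y\in\mathbb{D}_I,\ Y\ge X\}.$$ Then $I^L$ and $I^U$ are regular.
   Context: Let $(\Omega,\mathcal{F},\mathbb{P})$ be a probability space with $\mathcal{F}$ complete, and $\mathcal{H}\subseteq\mathcal{F}$ a complete sub-$\sigma$-algebra. $\overline{\mathbb{R}}=\mathbb{R}\cup\{\pm\infty\}$ with conventions $r\pm\infty=\pm\infty$, $\infty-\infty=0$, $\infty+\infty=\infty$, $0\times(\pm\infty)=0$; $\mathbb{L}^0(G,\mathcal{G})$ is the set of $\mathcal{G}$-measurable random variables a.s. valued in $G$. For a family $\Gamma$ of random variables, $\operatorname{ess\,sup}_{\mathcal{H}}\Gamma$ is the smallest (a.s.) $\mathcal{H}$-measurable random variable dominating every element of $\Gamma$ a.s., and $\operatorname{ess\,inf}_{\mathcal{H}}\Gamma=-\operatorname{ess\,sup}_{\mathcal{H}}(-\Gamma)$ (with single-variable versions $\operatorname{ess\,sup}_{\mathcal{H}}(X)=\operatorname{ess\,sup}_{\mathcal{H}}\{X\}$). A conditional indicator w.r.t. $\mathcal{H}$ is a map $I:\mathbb{D}_I\to\mathbb{L}^0(\overline{\mathbb{R}},\mathcal{H})$, $0\in\mathbb{D}_I\subseteq\mathbb{L}^0(\overline{\mathbb{R}},\mathcal{F})$,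 with $I(X)\in[\operatorname{ess\,inf}_{\mathcal{H}}(X),\operatorname{ess\,sup}_{\mathcal{H}}(X)]$ a.s. and $\mathbb{D}_I+\mathbb{L}^0(\overline{\mathbb{R}},\mathcal{H})\subseteq\mathbb{D}_I$. Increasing: $X\le Y\Rightarrow I(X)\le I(Y)$. A set is $\mathcal{H}$-decomposable if $X1_H+Y1_{\Omega\setminus H}$ belongs to it whenever $X,Y$ do and $H\in\mathcal{H}$. A map $J$ defined on a domain $\mathbb{D}_J$ is regular if $\mathbb{D}_J$ is $\mathcal{H}$-decomposable and for $X,Y\in\mathbb{D}_J$, $H\in\mathcal{H}$, $X1_H=Y1_H$ implies $J(X)1_H=J(Y)1_H$. *)

theory Defs
  imports "HOL-Probability.Probability"
begin

text \<open>Random variables are functions \<open>'a \<Rightarrow> ereal\<close>; elements of L0 are identified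
  up to almost sure equality, so all (in)equalities between random variables are
  understood almost surely w.r.t. the probability measure M. The sub-sigma-algebra
  H is represented by a measure N with the same space (subalgebra M N).\<close>

text \<open>Addition with the paper's convention infinity minus infinity = 0.\<close>
definition eadd :: "ereal \<Rightarrow> ereal \<Rightarrow> ereal" where
  "eadd a b = (if (a = \<infinity> \<and> b = -\<infinity>) \<or> (a = -\<infinity> \<and> b = \<infinity>) then 0 else a + b)"

definition is_cond_esssup :: "'a measure \<Rightarrow> 'a measure \<Rightarrow> ('a \<Rightarrow> ereal) set \<Rightarrow> ('a \<Rightarrow> ereal) \<Rightarrow> bool" where
  "is_cond_esssup M N \<Gamma> Z \<longleftrightarrow>
     Z \<in> borel_measurable N \<and>
     (\<forall>X\<in>\<Gamma>. AE \<omega> in M. X \<omega> \<le> Z \<omega>) \<and>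
     (\<forall>Z'. Z' \<in> borel_measurable N \<and> (\<forall>X\<in>\<Gamma>. AE \<omega> in M. X \<omega> \<le> Z' \<omega>)
            \<longrightarrow> (AE \<omega> in M. Z \<omega> \<le> Z' \<omega>))"

definition cond_esssup :: "'a measure \<Rightarrow> 'a measure \<Rightarrow> ('a \<Rightarrow> ereal) set \<Rightarrow> ('a \<Rightarrow> ereal)" where
  "cond_esssup M N \<Gamma> = (SOME Z. is_cond_esssup M N \<Gamma> Z)"

definition cond_essinf :: "'a measure \<Rightarrow> 'a measure \<Rightarrow> ('a \<Rightarrow> ereal) set \<Rightarrow> ('a \<Rightarrow> ereal)" where
  "cond_essinf M N \<Gamma> = (\<lambda>\<omega>. - cond_esssup M N ((\<lambda>X \<omega>. - X \<omega>) ` \<Gamma>) \<omega>)"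

text \<open>Conditional indicator w.r.t. H with domain D. Since the paper works on L0
  (a.s.-equivalence classes), D is closed under a.s. equality and I respects a.s. equality.\<close>
definition cond_indicator :: "'a measure \<Rightarrow> 'a measure \<Rightarrow> ('a \<Rightarrow> ereal) set \<Rightarrow> (('a \<Rightarrow> ereal) \<Rightarrow> ('a \<Rightarrow> ereal)) \<Rightarrow> bool" where
  "cond_indicator M N D I \<longleftrightarrow>
     (\<lambda>_. 0) \<in> D \<and> D \<subseteq> borel_measurable M \<and>
     (\<forall>X\<in>D. \<forall>Y\<in>borel_measurable M. (AE \<omega> in M. X \<omega> = Y \<omega>) \<longrightarrow> Y \<in> D) \<and>
     (\<forall>X\<in>D. \<forall>Y\<in>D. (AE \<omega> in M. X \<omega> = Y \<omega>) \<longrightarrow> (AE \<omega> in M. I X \<omega> = I Y \<omega>)) \<and>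
     (\<forall>X\<in>D. I X \<in> borel_measurable N) \<and>
     (\<forall>X\<in>D. AE \<omega> in M. cond_essinf M N {X} \<omega> \<le> I X \<omega> \<and> I X \<omega> \<le> cond_esssup M N {X} \<omega>) \<and>
     (\<forall>X\<in>D. \<forall>Z\<in>borel_measurable N. (\<lambda>\<omega>. eadd (X \<omega>) (Z \<omega>)) \<in> D)"

definition increasing_on :: "'a measure \<Rightarrow> ('a \<Rightarrow> ereal) set \<Rightarrow> (('a \<Rightarrow> ereal) \<Rightarrow> ('a \<Rightarrow> ereal)) \<Rightarrow> bool" where
  "increasing_on M D I \<longleftrightarrow>
     (\<forall>X\<in>D. \<forall>Y\<in>D. (AE \<omega> in M. X \<omega> \<le> Y \<omega>) \<longrightarrow> (AE \<omega> in M. I X \<omega> \<le> I Y \<omega>))"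

text \<open>X 1_H (with 0 * (+-infinity) = 0).\<close>
definition ind_mul :: "'a set \<Rightarrow> ('a \<Rightarrow> ereal) \<Rightarrow> ('a \<Rightarrow> ereal)" where
  "ind_mul H X = (\<lambda>\<omega>. if \<omega> \<in> H then X \<omega> else 0)"

definition decomposable :: "'a measure \<Rightarrow> ('a \<Rightarrow> ereal) set \<Rightarrow> bool" where
  "decomposable N D \<longleftrightarrow>
     (\<forall>X\<in>D. \<forall>Y\<in>D. \<forall>H\<in>sets N. (\<lambda>\<omega>. if \<omega> \<in> H then X \<omega> else Y \<omega>) \<in> D)"

definition regular :: "'a measure \<Rightarrow> 'a measure \<Rightarrow> ('a \<Rightarrow> ereal) set \<Rightarrow> (('a \<Rightarrow> ereal) \<Rightarrow> ('a \<Rightarrow> ereal)) \<Rightarrow> bool" where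
  "regular M N D J \<longleftrightarrow> decomposable N D \<and>
     (\<forall>X\<in>D. \<forall>Y\<in>D. \<forall>H\<in>sets N.
        (AE \<omega> in M. ind_mul H X \<omega> = ind_mul H Y \<omega>) \<longrightarrow>
        (AE \<omega> in M. ind_mul H (J X) \<omega> = ind_mul H (J Y) \<omega>))"

definition lower_ext :: "'a measure \<Rightarrow> 'a measure \<Rightarrow> ('a \<Rightarrow> ereal) set \<Rightarrow> (('a \<Rightarrow> ereal) \<Rightarrow> ('a \<Rightarrow> ereal)) \<Rightarrow> ('a \<Rightarrow> ereal) \<Rightarrow> ('a \<Rightarrow> ereal)" where
  "lower_ext M N D I X = cond_esssup M N {I Y | Y. Y \<in> D \<and> (AE \<omega> in M. Y \<omega> \<le> X \<omega>)}"

definition upper_ext :: "'a measure \<Rightarrow> 'a measure \<Rightarrow> ('a \<Rightarrow> ereal) set \<Rightarrow> (('a \<Rightarrow> ereal) \<Rightarrow> ('a \<Rightarrow> ereal)) \<Rightarrow> ('a \<Rightarrow> ereal) \<Rightarrow> ('a \<Rightarrow> ereal)" where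
  "upper_ext M N D I X = cond_essinf M N {I Y | Y. Y \<in> D \<and> (AE \<omega> in M. X \<omega> \<le> Y \<omega>)}"

end

theory Submission imports Defs begin

text \<open>Regularity of the extensions is a local statement. If X and Y agree on H \<in> \<H>,
  every Z \<in> D below X can be patched to the variable equal to Z on H and to -\<infinity> off H;
  it lies in D, lies below Y, and by regularity of I has the same indicator value as Z
  on H. Hence on H each element of the family defining I^L(X) is dominated by an element
  of the family defining I^L(Y), so the conditional essential suprema compare on H;
  symmetrically (patching with +\<infinity>) for I^U. The conditional essential suprema exist
  because a bounded strictly increasing transform of ereal turns the supremum over
  countable subfamilies into a bounded monotone set function, which attains its
  maximum on a countable subfamily.\<close>

definition arctan_ereal :: "ereal \<Rightarrow> real" where
  "arctan_ereal x = (case x of ereal r \<Rightarrow> arctan r | PInfty \<Rightarrow> pi/2 | MInfty \<Rightarrow> - pi/2)"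

lemma strict_mono_arctan_ereal: "strict_mono arctan_ereal"
proof (rule strict_monoI)
  fix a b :: ereal assume "a < b"
  then show "arctan_ereal a < arctan_ereal b"
    using arctan_ubound arctan_lbound
    by (cases a; cases b) (auto simp: arctan_ereal_def arctan_less_iff)
qed

lemma abs_arctan_ereal_le: "\<bar>arctan_ereal x\<bar> \<le> pi/2"
proof (cases x)
  case (real r)
  then show ?thesis
    using arctan_bounded[of r] by (auto simp: arctan_ereal_def abs_if)
qed (simp_all add: arctan_ereal_def)

lemma borel_measurable_arctan_ereal[measurable]:
  assumes "f \<in> borel_measurable M"
  shows "(\<lambda>x. arctan_ereal (f x)) \<in> borel_measurable M"
  by (rule borel_measurable_ereal_cases[OF assms]) (simp add: arctan_ereal_def, measurable, rule assms)

lemma countable_subset_maximum: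
  fixes v :: "'b set \<Rightarrow> real"
  assumes bounded: "\<And>C. countable C \<Longrightarrow> C \<subseteq> \<Gamma> \<Longrightarrow> v C \<le> B"
    and mono: "\<And>C C'. countable C' \<Longrightarrow> C' \<subseteq> \<Gamma> \<Longrightarrow> C \<subseteq> C' \<Longrightarrow> v C \<le> v C'"
  shows "\<exists>C. countable C \<and> C \<subseteq> \<Gamma> \<and> (\<forall>C'. countable C' \<and> C' \<subseteq> \<Gamma> \<longrightarrow> v C' \<le> v C)"
proof -
  define A where "A = {C. countable C \<and> C \<subseteq> \<Gamma>}"
  define s where "s = Sup (v ` A)"
  have bdd: "bdd_above (v ` A)"
    using bounded by (intro bdd_aboveI[where M=B]) (auto simp: A_def)
  have "{} \<in> A" by (simp add: A_def)
  have "\<exists>C\<in>A. s - 1 / Suc n < v C" for n :: nat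
  proof -
    have "s - 1 / Suc n < Sup (v ` A)" by (simp add: s_def)
    then show ?thesis
      using \<open>{} \<in> A\<close> bdd by (subst (asm) less_cSup_iff) auto
  qed
  then obtain Cn where Cn: "\<And>n. Cn n \<in> A" "\<And>n. s - 1 / Suc n < v (Cn n)" by metis
  define C where "C = \<Union>(range Cn)"
  have "C \<in> A" using Cn(1) by (auto simp: C_def A_def)
  have "s \<le> v C"
  proof (rule ccontr)
    assume "\<not> s \<le> v C"
    then obtain n where n: "inverse (real (Suc n)) < s - v C"
      using reals_Archimedean[of "s - v C"] by auto
    have "v (Cn n) \<le> v C"
      using \<open>C \<in> A\<close> by (intro mono) (auto simp: C_def A_def)
    with Cn(2)[of n] n show False by (simp add: inverse_eq_divide)
  qed
  moreover have "v C' \<le> s" if "C' \<in> A" for C'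
    using bdd that by (auto simp: s_def intro: cSup_upper)
  ultimately show ?thesis
    using \<open>C \<in> A\<close> unfolding A_def by (blast intro: order_trans)
qed

lemma (in prob_space) countable_dominating_subfamily:
  fixes \<Gamma> :: "('a \<Rightarrow> ereal) set"
  assumes "\<Gamma> \<subseteq> borel_measurable M"
  shows "\<exists>C. countable C \<and> C \<subseteq> \<Gamma> \<and> (\<forall>X\<in>\<Gamma>. AE \<omega> in M. X \<omega> \<le> (SUP f\<in>C. f \<omega>))"
proof -
  define S where "S C = (\<lambda>\<omega>. SUP f\<in>C. f \<omega>)" for C :: "('a \<Rightarrow> ereal) set"
  define v where "v C = (\<integral>\<omega>. arctan_ereal (S C \<omega>) \<partial>M)" for C
  have S_mono: "S C \<omega> \<le> S C' \<omega>" if "C \<subseteq> C'" for C C' \<omega>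
    unfolding S_def using that by (rule SUP_subset_mono) simp
  have integrable: "integrable M (\<lambda>\<omega>. arctan_ereal (S C \<omega>))"
    if "countable C" "C \<subseteq> \<Gamma>" for C
  proof (rule integrable_const_bound[where B="pi/2"])
    have "S C \<in> borel_measurable M"
      unfolding S_def using that assms by (intro borel_measurable_SUP) auto
    then show "(\<lambda>\<omega>. arctan_ereal (S C \<omega>)) \<in> borel_measurable M" by measurable
  qed (simp add: abs_arctan_ereal_le[simplified])
  have v_bounded: "v C \<le> pi/2" if "countable C" "C \<subseteq> \<Gamma>" for C
  proof -
    have "v C \<le> (\<integral>\<omega>. pi/2 \<partial>M)"
      unfolding v_def using integrable[OF that]
      by (intro integral_mono) (simp_all add: abs_le_D1[OF abs_arctan_ereal_le, simplified])
    then show ?thesis by (simp add: prob_space)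
  qed
  have v_mono: "v C \<le> v C'" if "countable C'" "C' \<subseteq> \<Gamma>" "C \<subseteq> C'" for C C'
    unfolding v_def
  proof (rule integral_mono)
    show "integrable M (\<lambda>\<omega>. arctan_ereal (S C \<omega>))"
      using that countable_subset by (intro integrable) auto
    show "integrable M (\<lambda>\<omega>. arctan_ereal (S C' \<omega>))"
      using that by (intro integrable)
    show "arctan_ereal (S C \<omega>) \<le> arctan_ereal (S C' \<omega>)" for \<omega>
      using S_mono[OF \<open>C \<subseteq> C'\<close>] by (simp add: strict_mono_less_eq[OF strict_mono_arctan_ereal])
  qed
  obtain C where C: "countable C" "C \<subseteq> \<Gamma>"
    and max: "\<And>C'. countable C' \<Longrightarrow> C' \<subseteq> \<Gamma> \<Longrightarrow> v C' \<le> v C"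
    using countable_subset_maximum[of \<Gamma> v "pi/2", OF v_bounded v_mono] by auto
  have "AE \<omega> in M. X \<omega> \<le> S C \<omega>" if "X \<in> \<Gamma>" for X
  proof -
    let ?C' = "insert X C"
    have C': "countable ?C'" "?C' \<subseteq> \<Gamma>" using C that by auto
    have "(\<integral>\<omega>. arctan_ereal (S ?C' \<omega>) - arctan_ereal (S C \<omega>) \<partial>M) = v ?C' - v C"
      unfolding v_def using integrable[OF C'] integrable[OF C] by (rule Bochner_Integration.integral_diff)
    also have "\<dots> = 0"
      using max[OF C'] v_mono[OF C' subset_insertI] by linarith
    finally have "(\<integral>\<omega>. arctan_ereal (S ?C' \<omega>) - arctan_ereal (S C \<omega>) \<partial>M) = 0" .
    moreover have "arctan_ereal (S C \<omega>) \<le> arctan_ereal (S ?C' \<omega>)" for \<omega>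
      using S_mono[OF subset_insertI] by (simp add: strict_mono_less_eq[OF strict_mono_arctan_ereal])
    ultimately have "AE \<omega> in M. arctan_ereal (S ?C' \<omega>) - arctan_ereal (S C \<omega>) = 0"
      using integrable[OF C'] integrable[OF C] by (subst (asm) integral_nonneg_eq_0_iff_AE) auto
    then have "AE \<omega> in M. S ?C' \<omega> = S C \<omega>"
      by (simp add: strict_mono_eq[OF strict_mono_arctan_ereal])
    then show ?thesis
      by eventually_elim (simp add: S_def max_def split: if_split_asm)
  qed
  with C show ?thesis by (auto simp: S_def)
qed

lemma is_cond_esssup_cond_esssup:
  assumes "prob_space M" "subalgebra M N" "\<Gamma> \<subseteq> borel_measurable N"
  shows "is_cond_esssup M N \<Gamma> (cond_esssup M N \<Gamma>)"
proof -
  interpret prob_space M by fact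
  have "\<Gamma> \<subseteq> borel_measurable M"
    using assms(3) measurable_from_subalg[OF assms(2)] by auto
  then obtain C where C: "countable C" "C \<subseteq> \<Gamma>"
    and dominating: "\<forall>X\<in>\<Gamma>. AE \<omega> in M. X \<omega> \<le> (SUP f\<in>C. f \<omega>)"
    by (auto dest: countable_dominating_subfamily)
  have "is_cond_esssup M N \<Gamma> (\<lambda>\<omega>. SUP f\<in>C. f \<omega>)"
    unfolding is_cond_esssup_def
  proof (intro conjI allI impI dominating)
    show "(\<lambda>\<omega>. SUP f\<in>C. f \<omega>) \<in> borel_measurable N"
      using C assms(3) by (intro borel_measurable_SUP) auto
    fix Z assume "Z \<in> borel_measurable N \<and> (\<forall>X\<in>\<Gamma>. AE \<omega> in M. X \<omega> \<le> Z \<omega>)"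
    then have "AE \<omega> in M. \<forall>f\<in>C. f \<omega> \<le> Z \<omega>"
      using C by (subst AE_ball_countable) auto
    then show "AE \<omega> in M. (SUP f\<in>C. f \<omega>) \<le> Z \<omega>"
      by eventually_elim (auto intro: SUP_least)
  qed
  then show ?thesis
    unfolding cond_esssup_def by (rule someI[where P = "is_cond_esssup M N \<Gamma>"])
qed

lemma is_cond_esssup_le_on:
  assumes Z1: "is_cond_esssup M N \<Gamma>1 Z1" and Z2: "is_cond_esssup M N \<Gamma>2 Z2" and "H \<in> sets N"
    and dominated: "\<And>g. g \<in> \<Gamma>1 \<Longrightarrow> \<exists>g'\<in>\<Gamma>2. AE \<omega> in M. \<omega> \<in> H \<longrightarrow> g \<omega> \<le> g' \<omega>"
  shows "AE \<omega> in M. \<omega> \<in> H \<longrightarrow> Z1 \<omega> \<le> Z2 \<omega>"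
proof -
  define Z where "Z = (\<lambda>\<omega>. if \<omega> \<in> H then Z2 \<omega> else Z1 \<omega>)"
  have "Z \<in> borel_measurable N"
    using Z1 Z2 \<open>H \<in> sets N\<close> unfolding Z_def is_cond_esssup_def by (intro measurable_If_set) auto
  moreover have "AE \<omega> in M. g \<omega> \<le> Z \<omega>" if g: "g \<in> \<Gamma>1" for g
  proof -
    obtain g' where g': "g' \<in> \<Gamma>2" and le_on: "AE \<omega> in M. \<omega> \<in> H \<longrightarrow> g \<omega> \<le> g' \<omega>"
      using dominated[OF g] by blast
    have "AE \<omega> in M. g' \<omega> \<le> Z2 \<omega>"
      using Z2 g' unfolding is_cond_esssup_def by blast
    moreover have "AE \<omega> in M. g \<omega> \<le> Z1 \<omega>"
      using Z1 g unfolding is_cond_esssup_def by blast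
    ultimately show ?thesis
      using le_on by eventually_elim (auto simp: Z_def)
  qed
  ultimately have "AE \<omega> in M. Z1 \<omega> \<le> Z \<omega>"
    using Z1 unfolding is_cond_esssup_def by blast
  then show ?thesis
    by eventually_elim (simp add: Z_def split: if_splits)
qed

lemma AE_ind_mul_eq_iff:
  "(AE \<omega> in M. ind_mul H X \<omega> = ind_mul H Y \<omega>) \<longleftrightarrow> (AE \<omega> in M. \<omega> \<in> H \<longrightarrow> X \<omega> = Y \<omega>)"
  by (simp add: ind_mul_def)

lemma regular_if_le_on:
  assumes "decomposable N D"
    and le_on: "\<And>X Y H. X \<in> D \<Longrightarrow> Y \<in> D \<Longrightarrow> H \<in> sets N \<Longrightarrow>
      AE \<omega> in M. \<omega> \<in> H \<longrightarrow> X \<omega> = Y \<omega> \<Longrightarrow> AE \<omega> in M. \<omega> \<in> H \<longrightarrow> J X \<omega> \<le> J Y \<omega>"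
  shows "regular M N D J"
  unfolding regular_def AE_ind_mul_eq_iff
proof (intro conjI assms(1) ballI impI)
  fix X Y H assume XY: "X \<in> D" "Y \<in> D" "H \<in> sets N"
    and eq_on: "AE \<omega> in M. \<omega> \<in> H \<longrightarrow> X \<omega> = Y \<omega>"
  have "AE \<omega> in M. \<omega> \<in> H \<longrightarrow> Y \<omega> = X \<omega>"
    using eq_on by eventually_elim auto
  from le_on[OF XY eq_on] le_on[OF XY(2,1,3) this]
  show "AE \<omega> in M. \<omega> \<in> H \<longrightarrow> J X \<omega> = J Y \<omega>"
    by eventually_elim auto
qed

lemma regularD_on:
  assumes "regular M N D J" "X \<in> D" "Y \<in> D" "H \<in> sets N"
    and "AE \<omega> in M. \<omega> \<in> H \<longrightarrow> X \<omega> = Y \<omega>"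
  shows "AE \<omega> in M. \<omega> \<in> H \<longrightarrow> J X \<omega> = J Y \<omega>"
proof -
  have "\<forall>X\<in>D. \<forall>Y\<in>D. \<forall>H\<in>sets N. (AE \<omega> in M. \<omega> \<in> H \<longrightarrow> X \<omega> = Y \<omega>) \<longrightarrow>
      (AE \<omega> in M. \<omega> \<in> H \<longrightarrow> J X \<omega> = J Y \<omega>)"
    using assms(1) unfolding regular_def AE_ind_mul_eq_iff by (rule conjunct2)
  then show ?thesis
    using assms(2-5) by blast
qed

lemma regular_uminus:
  assumes "regular M N D J"
  shows "regular M N D (\<lambda>X \<omega>. - J X \<omega>)"
  using assms unfolding regular_def AE_ind_mul_eq_iff by simp

lemma decomposable_borel_measurable:
  assumes "subalgebra M N"
  shows "decomposable N (borel_measurable M)"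
  using assms unfolding decomposable_def subalgebra_def by (auto intro!: measurable_If_set)

lemma regular_patch:
  assumes "regular M N D I" "Z \<in> D" "W \<in> D" "H \<in> sets N"
  shows "(\<lambda>\<omega>. if \<omega> \<in> H then Z \<omega> else W \<omega>) \<in> D"
    and "AE \<omega> in M. \<omega> \<in> H \<longrightarrow> I (\<lambda>\<omega>. if \<omega> \<in> H then Z \<omega> else W \<omega>) \<omega> = I Z \<omega>"
proof -
  let ?P = "\<lambda>\<omega>. if \<omega> \<in> H then Z \<omega> else W \<omega>"
  have "decomposable N D"
    using assms(1) by (simp add: regular_def)
  then show P: "?P \<in> D"
    using assms(2-4) unfolding decomposable_def by blast
  have "AE \<omega> in M. \<omega> \<in> H \<longrightarrow> ?P \<omega> = Z \<omega>"
    by (rule AE_I2) simp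
  then show "AE \<omega> in M. \<omega> \<in> H \<longrightarrow> I ?P \<omega> = I Z \<omega>"
    by (rule regularD_on[where J = I, OF assms(1) P assms(2,4)])
qed

lemma cond_indicator_const_infinity:
  assumes "cond_indicator M N D I"
  shows "(\<lambda>_. \<infinity>) \<in> D" and "(\<lambda>_. -\<infinity>) \<in> D"
proof -
  from assms have zero: "(\<lambda>_. 0) \<in> D"
    and translate: "\<forall>X\<in>D. \<forall>Z\<in>borel_measurable N. (\<lambda>\<omega>. eadd (X \<omega>) (Z \<omega>)) \<in> D"
    unfolding cond_indicator_def by blast+
  have "(\<lambda>\<omega>. eadd ((\<lambda>_. 0) \<omega>) ((\<lambda>_. c) \<omega>)) \<in> D" for c
    by (rule translate[rule_format, OF zero]) simp
  from this[of \<infinity>] this[of "-\<infinity>"] show "(\<lambda>_. \<infinity>) \<in> D" "(\<lambda>_. -\<infinity>) \<in> D"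
    by (simp_all add: eadd_def)
qed

lemma regular_cond_esssup_family:
  fixes G :: "('a \<Rightarrow> ereal) \<Rightarrow> ('a \<Rightarrow> ereal) set"
  assumes "prob_space M" "subalgebra M N" "\<And>X. G X \<subseteq> borel_measurable N"
    and dominated: "\<And>X Y H g. H \<in> sets N \<Longrightarrow> AE \<omega> in M. \<omega> \<in> H \<longrightarrow> X \<omega> = Y \<omega> \<Longrightarrow> g \<in> G X \<Longrightarrow>
      \<exists>g'\<in>G Y. AE \<omega> in M. \<omega> \<in> H \<longrightarrow> g \<omega> \<le> g' \<omega>"
  shows "regular M N (borel_measurable M) (\<lambda>X. cond_esssup M N (G X))"
proof (rule regular_if_le_on)
  show "decomposable N (borel_measurable M)"
    using assms(2) by (rule decomposable_borel_measurable)
  fix X Y :: "'a \<Rightarrow> ereal" and H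
  assume "H \<in> sets N" "AE \<omega> in M. \<omega> \<in> H \<longrightarrow> X \<omega> = Y \<omega>"
  then show "AE \<omega> in M. \<omega> \<in> H \<longrightarrow> cond_esssup M N (G X) \<omega> \<le> cond_esssup M N (G Y) \<omega>"
    using is_cond_esssup_cond_esssup[OF assms(1,2,3)] dominated
    by (intro is_cond_esssup_le_on)
qed

lemma regular_lower_ext:
  assumes "prob_space M" "subalgebra M N" "cond_indicator M N D I" "regular M N D I"
  shows "regular M N (borel_measurable M) (lower_ext M N D I)"
  unfolding lower_ext_def[abs_def]
proof (rule regular_cond_esssup_family[OF assms(1,2)])
  show "{I Z |Z. Z \<in> D \<and> (AE \<omega> in M. Z \<omega> \<le> X \<omega>)} \<subseteq> borel_measurable N" for X
    using assms(3) by (auto simp: cond_indicator_def)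
  fix X Y H g assume H: "H \<in> sets N" and eq_on: "AE \<omega> in M. \<omega> \<in> H \<longrightarrow> X \<omega> = Y \<omega>"
    and "g \<in> {I Z |Z. Z \<in> D \<and> (AE \<omega> in M. Z \<omega> \<le> X \<omega>)}"
  then obtain Z where g: "g = I Z" and Z: "Z \<in> D" "AE \<omega> in M. Z \<omega> \<le> X \<omega>" by blast
  define P where "P = (\<lambda>\<omega>. if \<omega> \<in> H then Z \<omega> else -\<infinity>)"
  have P: "P \<in> D" "AE \<omega> in M. \<omega> \<in> H \<longrightarrow> I P \<omega> = I Z \<omega>"
    unfolding P_def using assms(4) Z(1) cond_indicator_const_infinity(2)[OF assms(3)] H
    by (rule regular_patch)+
  have "AE \<omega> in M. P \<omega> \<le> Y \<omega>"
    using Z(2) eq_on by eventually_elim (auto simp: P_def)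
  with P show "\<exists>g'\<in>{I Z |Z. Z \<in> D \<and> (AE \<omega> in M. Z \<omega> \<le> Y \<omega>)}. AE \<omega> in M. \<omega> \<in> H \<longrightarrow> g \<omega> \<le> g' \<omega>"
    unfolding g by (intro bexI[of _ "I P"]) (auto elim: AE_mp)
qed

lemma regular_upper_ext:
  assumes "prob_space M" "subalgebra M N" "cond_indicator M N D I" "regular M N D I"
  shows "regular M N (borel_measurable M) (upper_ext M N D I)"
  unfolding upper_ext_def[abs_def] cond_essinf_def
proof (rule regular_uminus, rule regular_cond_esssup_family[OF assms(1,2)])
  show "(\<lambda>X \<omega>. - X \<omega>) ` {I Z |Z. Z \<in> D \<and> (AE \<omega> in M. X \<omega> \<le> Z \<omega>)} \<subseteq> borel_measurable N" for X
    using assms(3) by (auto simp: cond_indicator_def)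
  fix X Y H g assume H: "H \<in> sets N" and eq_on: "AE \<omega> in M. \<omega> \<in> H \<longrightarrow> X \<omega> = Y \<omega>"
    and "g \<in> (\<lambda>X \<omega>. - X \<omega>) ` {I Z |Z. Z \<in> D \<and> (AE \<omega> in M. X \<omega> \<le> Z \<omega>)}"
  then obtain Z where g: "g = (\<lambda>\<omega>. - I Z \<omega>)" and Z: "Z \<in> D" "AE \<omega> in M. X \<omega> \<le> Z \<omega>" by blast
  define P where "P = (\<lambda>\<omega>. if \<omega> \<in> H then Z \<omega> else \<infinity>)"
  have P: "P \<in> D" "AE \<omega> in M. \<omega> \<in> H \<longrightarrow> I P \<omega> = I Z \<omega>"
    unfolding P_def using assms(4) Z(1) cond_indicator_const_infinity(1)[OF assms(3)] H
    by (rule regular_patch)+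
  have "AE \<omega> in M. Y \<omega> \<le> P \<omega>"
    using Z(2) eq_on by eventually_elim (auto simp: P_def)
  with P show "\<exists>g'\<in>(\<lambda>X \<omega>. - X \<omega>) ` {I Z |Z. Z \<in> D \<and> (AE \<omega> in M. Y \<omega> \<le> Z \<omega>)}.
      AE \<omega> in M. \<omega> \<in> H \<longrightarrow> g \<omega> \<le> g' \<omega>"
    unfolding g by (intro bexI[of _ "\<lambda>\<omega>. - I P \<omega>"]) (auto elim: AE_mp)
qed

theorem mainTheorem8:
  fixes M N :: "'a measure"
    and D :: "('a \<Rightarrow> ereal) set"
    and I :: "('a \<Rightarrow> ereal) \<Rightarrow> ('a \<Rightarrow> ereal)"
  assumes "prob_space M"
    and "complete_measure M"
    and "subalgebra M N"
    and "null_sets M \<subseteq> sets N"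
    and "cond_indicator M N D I"
    and "increasing_on M D I"
    and "regular M N D I"
  shows "regular M N (borel_measurable M) (lower_ext M N D I)
       \<and> regular M N (borel_measurable M) (upper_ext M N D I)"
  using regular_lower_ext[OF assms(1,3,5,7)] regular_upper_ext[OF assms(1,3,5,7)] ..

end
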